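(* Let $K$ be a field, $m\ge2$, $d_1,\ldots,d_m$ positive integers, and $I_2(D)\subset K[x_1,\ldots,x_m,y_1,\ldots,y_m]$ the ideal generated by the $2$-minors of $D=\begin{pmatrix}x_1^{d_1}&\cdots&x_m^{d_m}\\ y_1^{d_1}&\cdots&y_m^{d_m}\end{pmatrix}$. Then $I_2(D)$ is generated by its indispensable binomials.
   Context: A binomial $B\in I_2(D)$ is indispensable if every system of binomial generators of $I_2(D)$ contains $B$ or $-B$. *)

theory Defs
  imports "HOL-Library.Poly_Mapping"
begin

text \<open>Polynomial ring K[x_i, y_i : i in 'n] : variables are Inl i (= x_i) and Inr i (= y_i);
  monomials are exponent vectors, polynomials finitely supported coefficient maps.\<close>

type_synonym ('n, 'k) mpoly = "(('n + 'n) \<Rightarrow>\<^sub>0 nat) \<Rightarrow>\<^sub>0 'k"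

definition monom :: "('n + 'n \<Rightarrow>\<^sub>0 nat) \<Rightarrow> ('n, 'k::field) mpoly" where
  "monom a = Poly_Mapping.single a 1"

definition var_pow :: "('n + 'n) \<Rightarrow> nat \<Rightarrow> ('n, 'k::field) mpoly" where
  "var_pow v e = monom (Poly_Mapping.single v e)"

definition ideal_gen :: "('n, 'k::field) mpoly set \<Rightarrow> ('n, 'k) mpoly set" where
  "ideal_gen S = {p. \<exists>F c. finite F \<and> F \<subseteq> S \<and> p = (\<Sum>g\<in>F. c g * g)}"

definition minor2 :: "('n \<Rightarrow> nat) \<Rightarrow> 'n \<Rightarrow> 'n \<Rightarrow> ('n, 'k::field) mpoly" where
  "minor2 d i j = var_pow (Inl i) (d i) * var_pow (Inr j) (d j)
                 - var_pow (Inl j) (d j) * var_pow (Inr i) (d i)"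

definition I2 :: "('n \<Rightarrow> nat) \<Rightarrow> ('n, 'k::field) mpoly set" where
  "I2 d = ideal_gen {minor2 d i j | i j. i \<noteq> j}"

definition is_binomial :: "('n, 'k::field) mpoly \<Rightarrow> bool" where
  "is_binomial B \<longleftrightarrow> (\<exists>u v. u \<noteq> v \<and> B = monom u - monom v)"

definition binomial_gen_system :: "('n, 'k::field) mpoly set \<Rightarrow> ('n, 'k) mpoly set \<Rightarrow> bool" where
  "binomial_gen_system I G \<longleftrightarrow> G \<subseteq> I \<and> (\<forall>B\<in>G. is_binomial B) \<and> ideal_gen G = I"

definition indispensable :: "('n, 'k::field) mpoly set \<Rightarrow> ('n, 'k) mpoly \<Rightarrow> bool" where
  "indispensable I B \<longleftrightarrow> is_binomial B \<and> B \<in> I \<and>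
     (\<forall>G. binomial_gen_system I G \<longrightarrow> B \<in> G \<or> - B \<in> G)"

end

theory Submission
  imports Defs "HOL.Modules"
begin

text \<open>Every minor \<open>M\<^sub>i\<^sub>j = x\<^sub>i\<^bsup>d\<^sub>i\<^esup>y\<^sub>j\<^bsup>d\<^sub>j\<^esup> - x\<^sub>j\<^bsup>d\<^sub>j\<^esup>y\<^sub>i\<^bsup>d\<^sub>i\<^esup>\<close> is indispensable, and the minors generate \<open>I\<^sub>2(D)\<close>.
  Grade the ring by \<open>\<nat>\<^sup>m\<close> with \<open>x\<^sub>k\<close> and \<open>y\<^sub>k\<close> of degree \<open>e\<^sub>k\<close>; then \<open>M\<^sub>i\<^sub>j\<close> is homogeneous of degree
  \<open>\<delta> = d\<^sub>i e\<^sub>i + d\<^sub>j e\<^sub>j\<close>, and since all \<open>d\<^sub>k > 0\<close> no other minor has degree \<open>\<le> \<delta>\<close>. Hence every element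
  of \<open>I\<^sub>2(D)\<close>, restricted to the monomials of degree \<open>\<le> \<delta>\<close>, is a scalar multiple of \<open>M\<^sub>i\<^sub>j\<close>.
  A binomial generating system must produce the monomial \<open>x\<^sub>i\<^bsup>d\<^sub>i\<^esup>y\<^sub>j\<^bsup>d\<^sub>j\<^esup>\<close>, so one of its
  binomials has a monomial of degree \<open>\<le> \<delta>\<close>, and lying in \<open>I\<^sub>2(D)\<close> this binomial is \<open>\<plusminus>M\<^sub>i\<^sub>j\<close>.\<close>

interpretation ring_module: module "(*) :: 'a::comm_ring_1 \<Rightarrow> 'a \<Rightarrow> 'a"
  by unfold_locales (simp_all add: algebra_simps)

lemma ideal_gen_eq_span: "ideal_gen S = ring_module.span S"
  by (auto simp: ideal_gen_def ring_module.span_explicit)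

lemma ideal_gen_base: "g \<in> S \<Longrightarrow> g \<in> ideal_gen S"
  unfolding ideal_gen_eq_span by (rule ring_module.span_base)

lemma ideal_gen_mono: "S \<subseteq> T \<Longrightarrow> ideal_gen S \<subseteq> ideal_gen T"
  unfolding ideal_gen_eq_span by (rule ring_module.span_mono)

lemma ideal_gen_least: "S \<subseteq> ideal_gen T \<Longrightarrow> ideal_gen S \<subseteq> ideal_gen T"
  unfolding ideal_gen_eq_span by (rule ring_module.span_minimal[OF _ ring_module.subspace_span])

lemma ideal_gen_induct [consumes 1, case_names zero add mult]:
  assumes "p \<in> ideal_gen S"
    and "P 0"
    and "\<And>p q. P p \<Longrightarrow> P q \<Longrightarrow> P (p + q)"
    and "\<And>c g. g \<in> S \<Longrightarrow> P (c * g)"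
  shows "P p"
proof -
  obtain F c where "finite F" "F \<subseteq> S" "p = (\<Sum>g\<in>F. c g * g)"
    using assms(1) unfolding ideal_gen_def by blast
  then show ?thesis
    using assms(2-4) by (induction F arbitrary: p rule: finite_induct) auto
qed

lemma ideal_gen_monomial_divisor:
  assumes "p \<in> ideal_gen G" and "Poly_Mapping.lookup p a \<noteq> 0"
  shows "\<exists>g\<in>G. \<exists>w\<in>Poly_Mapping.keys g. \<exists>s. a = s + w"
  using assms
proof (induction p rule: ideal_gen_induct)
  case (add p q)
  then show ?case by (cases "Poly_Mapping.lookup p a = 0") (simp_all add: lookup_add)
next
  case (mult c g)
  then have "a \<in> Poly_Mapping.keys (c * g)" by (simp add: in_keys_iff)
  with mult.hyps show ?case using keys_mult[of c g] by blast
qed simp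

lemma lookup_mult_single_one:
  fixes p :: "'a::cancel_comm_monoid_add \<Rightarrow>\<^sub>0 'b::comm_ring_1"
  shows "Poly_Mapping.lookup (p * Poly_Mapping.single g 1) g = Poly_Mapping.lookup p 0"
proof -
  let ?e = "Poly_Mapping.single g (1::'b)"
  have "Poly_Mapping.lookup (p * ?e) g
      = (\<Sum>l. Poly_Mapping.lookup p l * (\<Sum>q. Poly_Mapping.lookup ?e q when g = l + q))"
    by (rule lookup_mult)
  also have "\<dots> = (\<Sum>l. Poly_Mapping.lookup p l when l = 0)"
  proof (rule Sum_any.cong)
    fix l
    have "(\<Sum>q. Poly_Mapping.lookup ?e q when g = l + q) = (\<Sum>q. (1::'b) when q = g \<and> l = 0)"
      by (rule Sum_any.cong) (auto simp: lookup_single when_def)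
    then show "Poly_Mapping.lookup p l * (\<Sum>q. Poly_Mapping.lookup ?e q when g = l + q)
        = (Poly_Mapping.lookup p l when l = 0)"
      by (cases "l = 0") (simp_all add: when_def)
  qed
  also have "\<dots> = Poly_Mapping.lookup p 0" by simp
  finally show ?thesis .
qed

lemma monom_mult: "(monom u :: ('n, 'k::field) mpoly) * monom v = monom (u + v)"
  by (simp add: monom_def mult_single)

lemma lookup_monom: "Poly_Mapping.lookup (monom u :: ('n, 'k::field) mpoly) w = (if w = u then 1 else 0)"
  by (simp add: monom_def lookup_single)

lemma lookup_mult_monom_nonzeroD:
  "Poly_Mapping.lookup (c * monom \<gamma> :: ('n, 'k::field) mpoly) w \<noteq> 0 \<Longrightarrow> \<exists>s. w = s + \<gamma>"
  using keys_mult[of c "monom \<gamma>"] by (auto simp: monom_def in_keys_iff[symmetric])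

lemma binomial_eq_plusminus:
  fixes a b u v :: "'n + 'n \<Rightarrow>\<^sub>0 nat"
  assumes "u \<noteq> v" "a \<noteq> b"
    and "Poly_Mapping.lookup (monom u - monom v :: ('n, 'k::field) mpoly) a \<noteq> 0"
    and "Poly_Mapping.lookup (monom u - monom v :: ('n, 'k) mpoly) b \<noteq> 0"
  shows "monom u - monom v = (monom a - monom b :: ('n, 'k) mpoly)
      \<or> monom u - monom v = - (monom a - monom b :: ('n, 'k) mpoly)"
proof -
  have "a \<in> {u, v}" "b \<in> {u, v}"
    using assms(3,4) by (auto simp: lookup_minus lookup_monom split: if_splits)
  then have "(u = a \<and> v = b) \<or> (u = b \<and> v = a)"
    using assms(1,2) by auto
  then show ?thesis by auto
qed

definition col_deg :: "('n + 'n \<Rightarrow>\<^sub>0 nat) \<Rightarrow> 'n \<Rightarrow> nat" where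
  "col_deg w k = Poly_Mapping.lookup w (Inl k) + Poly_Mapping.lookup w (Inr k)"

lemma col_deg_add: "col_deg (s + w) k = col_deg s k + col_deg w k"
  by (simp add: col_deg_def lookup_add)

lemma col_deg_add_le_self_imp_zero:
  assumes "col_deg (s + w) \<le> col_deg w"
  shows "s = 0"
proof (rule poly_mapping_eqI)
  fix v
  have "col_deg s k = 0" for k
    using le_funD[OF assms, of k] by (simp add: col_deg_add)
  then show "Poly_Mapping.lookup s v = Poly_Mapping.lookup 0 v"
    by (cases v) (auto simp: col_deg_def)
qed

lemma lookup_mult_monom_low:
  assumes "col_deg w \<le> col_deg \<gamma>"
  shows "Poly_Mapping.lookup (c * monom \<gamma> :: ('n, 'k::field) mpoly) w = (if w = \<gamma> then Poly_Mapping.lookup c 0 else 0)"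
proof (cases "w = \<gamma>")
  case True
  then show ?thesis by (simp add: monom_def lookup_mult_single_one)
next
  case False
  have "Poly_Mapping.lookup (c * monom \<gamma>) w = 0"
  proof (rule ccontr)
    assume "Poly_Mapping.lookup (c * monom \<gamma>) w \<noteq> 0"
    then obtain s where s: "w = s + \<gamma>" using lookup_mult_monom_nonzeroD by blast
    have "s = 0" using assms unfolding s by (rule col_deg_add_le_self_imp_zero)
    with s False show False by simp
  qed
  with False show ?thesis by simp
qed

lemma lookup_mult_monom_not_above:
  assumes "\<not> col_deg \<gamma> \<le> col_deg w"
  shows "Poly_Mapping.lookup (c * monom \<gamma> :: ('n, 'k::field) mpoly) w = 0"
proof (rule ccontr)
  assume "Poly_Mapping.lookup (c * monom \<gamma>) w \<noteq> 0"
  then obtain s where "w = s + \<gamma>" using lookup_mult_monom_nonzeroD by blast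
  then have "col_deg \<gamma> \<le> col_deg w" by (simp add: le_fun_def col_deg_add)
  with assms show False by contradiction
qed

definition minor_exp :: "('n \<Rightarrow> nat) \<Rightarrow> 'n \<Rightarrow> 'n \<Rightarrow> 'n + 'n \<Rightarrow>\<^sub>0 nat" where
  "minor_exp d i j = Poly_Mapping.single (Inl i) (d i) + Poly_Mapping.single (Inr j) (d j)"

lemma minor2_eq_monom:
  "(minor2 d i j :: ('n, 'k::field) mpoly) = monom (minor_exp d i j) - monom (minor_exp d j i)"
  by (simp add: minor2_def var_pow_def minor_exp_def monom_mult)

lemma col_deg_minor_exp:
  "col_deg (minor_exp d i j) k = (if k = i then d i else 0) + (if k = j then d j else 0)"
  by (simp add: col_deg_def minor_exp_def lookup_add lookup_single)

lemma col_deg_minor_exp_commute: "col_deg (minor_exp d i j) = col_deg (minor_exp d j i)"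
  by (simp add: fun_eq_iff col_deg_minor_exp)

lemma minor_exp_neq:
  assumes "d i > 0" "i \<noteq> j"
  shows "minor_exp d i j \<noteq> minor_exp d j i"
proof
  assume "minor_exp d i j = minor_exp d j i"
  then have "Poly_Mapping.lookup (minor_exp d i j) (Inl i) = Poly_Mapping.lookup (minor_exp d j i) (Inl i)"
    by simp
  with assms show False by (simp add: minor_exp_def lookup_add lookup_single)
qed

lemma col_deg_minor_exp_le_imp:
  assumes "\<forall>k. d k > 0" "k \<noteq> l"
    and le: "col_deg (minor_exp d k l) \<le> col_deg (minor_exp d i j)"
  shows "(k = i \<and> l = j) \<or> (k = j \<and> l = i)"
proof -
  have "x = i \<or> x = j" if "x \<in> {k, l}" for x
  proof (rule ccontr)
    assume "\<not> (x = i \<or> x = j)"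
    then have "col_deg (minor_exp d i j) x = 0"
      by (simp add: col_deg_minor_exp)
    moreover have "d x \<le> col_deg (minor_exp d k l) x"
      using that by (auto simp: col_deg_minor_exp)
    ultimately show False
      using le assms(1) by (metis le_funD le_zero_eq not_less order_trans)
  qed
  with assms(2) show ?thesis by blast
qed

definition low_part_multiple ::
    "('n + 'n \<Rightarrow>\<^sub>0 nat) \<Rightarrow> ('n + 'n \<Rightarrow>\<^sub>0 nat) \<Rightarrow> ('n, 'k::field) mpoly \<Rightarrow> bool" where
  "low_part_multiple a b p \<longleftrightarrow>
     (\<forall>w. col_deg w \<le> col_deg a \<longrightarrow> w \<noteq> a \<longrightarrow> w \<noteq> b \<longrightarrow> Poly_Mapping.lookup p w = 0)
     \<and> Poly_Mapping.lookup p b = - Poly_Mapping.lookup p a"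

lemma low_part_multiple_mult_minor_self:
  assumes "d i > 0" "i \<noteq> j"
  shows "low_part_multiple (minor_exp d i j) (minor_exp d j i) (c * minor2 d i j :: ('n, 'k::field) mpoly)"
proof -
  let ?a = "minor_exp d i j" and ?b = "minor_exp d j i"
  have "Poly_Mapping.lookup (c * minor2 d i j) w
      = (if w = ?a then Poly_Mapping.lookup c 0 else 0) - (if w = ?b then Poly_Mapping.lookup c 0 else 0)"
    if "col_deg w \<le> col_deg ?a" for w
    using that col_deg_minor_exp_commute[of d i j]
    by (simp add: minor2_eq_monom right_diff_distrib lookup_minus lookup_mult_monom_low)
  moreover have "?a \<noteq> ?b" using assms by (rule minor_exp_neq)
  ultimately show ?thesis
    by (simp add: low_part_multiple_def col_deg_minor_exp_commute[of d j i])
qed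

lemma low_part_multiple_mult_minor:
  assumes "\<forall>k. d k > 0" "i \<noteq> j" "k \<noteq> l"
  shows "low_part_multiple (minor_exp d i j) (minor_exp d j i) (c * minor2 d k l :: ('n, 'k::field) mpoly)"
proof -
  consider "k = i \<and> l = j" | "k = j \<and> l = i" | "\<not> (k = i \<and> l = j) \<and> \<not> (k = j \<and> l = i)"
    by blast
  then show ?thesis
  proof cases
    case 1
    with assms show ?thesis by (simp add: low_part_multiple_mult_minor_self)
  next
    case 2
    then have "minor2 d k l = - minor2 d i j"
      by (simp add: minor2_def)
    then have neg: "c * minor2 d k l = (- c) * minor2 d i j"
      by (metis mult_minus_left mult_minus_right)
    show ?thesis
      unfolding neg using assms by (intro low_part_multiple_mult_minor_self) auto
  next
    case 3
    have "Poly_Mapping.lookup (c * minor2 d k l) w = 0" if "col_deg w \<le> col_deg (minor_exp d i j)" for w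
    proof -
      have "\<not> col_deg (minor_exp d k l) \<le> col_deg w"
        using 3 col_deg_minor_exp_le_imp[OF assms(1,3) order_trans[OF _ that]] by blast
      then show ?thesis
        using col_deg_minor_exp_commute[of d k l]
        by (simp add: minor2_eq_monom right_diff_distrib lookup_minus lookup_mult_monom_not_above)
    qed
    then show ?thesis
      by (simp add: low_part_multiple_def col_deg_minor_exp_commute[of d j i])
  qed
qed

lemma low_part_multiple_I2:
  assumes "\<forall>k. d k > 0" "i \<noteq> j" "p \<in> (I2 d :: ('n, 'k::field) mpoly set)"
  shows "low_part_multiple (minor_exp d i j) (minor_exp d j i) p"
  using assms(3) unfolding I2_def
proof (induction p rule: ideal_gen_induct)
  case zero
  then show ?case by (simp add: low_part_multiple_def)
next
  case (add p q)
  then show ?case by (simp add: low_part_multiple_def lookup_add)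
next
  case (mult c g)
  with assms(1,2) show ?case by (auto intro: low_part_multiple_mult_minor)
qed

lemma minor2_in_I2: "i \<noteq> j \<Longrightarrow> minor2 d i j \<in> I2 d"
  unfolding I2_def by (rule ideal_gen_base) blast

lemma binomial_in_I2_with_low_monomial:
  fixes g :: "('n, 'k::field) mpoly"
  assumes "\<forall>k. d k > 0" "i \<noteq> j"
    and "g \<in> I2 d" "is_binomial g"
    and "w \<in> Poly_Mapping.keys g" "col_deg w \<le> col_deg (minor_exp d i j)"
  shows "g = minor2 d i j \<or> g = - minor2 d i j"
proof -
  let ?a = "minor_exp d i j" and ?b = "minor_exp d j i"
  have ab: "?a \<noteq> ?b" using assms(1,2) by (simp add: minor_exp_neq)
  obtain u v where uv: "u \<noteq> v" "g = monom u - monom v"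
    using assms(4) by (auto simp: is_binomial_def)
  have low: "low_part_multiple ?a ?b g"
    using assms(1-3) by (rule low_part_multiple_I2)
  have w: "Poly_Mapping.lookup g w \<noteq> 0"
    using assms(5) by (simp add: in_keys_iff)
  then have "w = ?a \<or> w = ?b"
    using low assms(6) unfolding low_part_multiple_def by blast
  then have "Poly_Mapping.lookup g ?a \<noteq> 0" "Poly_Mapping.lookup g ?b \<noteq> 0"
    using w low unfolding low_part_multiple_def by auto
  then show ?thesis
    using binomial_eq_plusminus[OF uv(1) ab] unfolding uv(2) minor2_eq_monom by blast
qed

lemma minor2_indispensable:
  assumes "\<forall>k. d k > 0" "i \<noteq> j"
  shows "indispensable (I2 d :: ('n, 'k::field) mpoly set) (minor2 d i j)"
proof -
  let ?a = "minor_exp d i j" and ?b = "minor_exp d j i"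
  have ab: "?a \<noteq> ?b" using assms by (simp add: minor_exp_neq)
  have "minor2 d i j \<in> G \<or> - minor2 d i j \<in> G"
    if G: "binomial_gen_system (I2 d :: ('n, 'k) mpoly set) G" for G
  proof -
    have "minor2 d i j \<in> ideal_gen G"
      using G minor2_in_I2[OF assms(2)] by (simp add: binomial_gen_system_def)
    moreover have "Poly_Mapping.lookup (minor2 d i j :: ('n, 'k) mpoly) ?a \<noteq> 0"
      using ab by (simp add: minor2_eq_monom lookup_minus lookup_monom)
    ultimately obtain g w s where g: "g \<in> G" "w \<in> Poly_Mapping.keys g" "?a = s + w"
      using ideal_gen_monomial_divisor by blast
    have "g \<in> I2 d" "is_binomial g"
      using G g(1) by (auto simp: binomial_gen_system_def)
    moreover have "col_deg w \<le> col_deg ?a"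
      using g(3) by (simp add: le_fun_def col_deg_add)
    ultimately have "g = minor2 d i j \<or> g = - minor2 d i j"
      using binomial_in_I2_with_low_monomial[OF assms _ _ g(2)] by blast
    with g(1) show ?thesis by auto
  qed
  moreover have "is_binomial (minor2 d i j :: ('n, 'k) mpoly)"
    using ab by (auto simp: is_binomial_def minor2_eq_monom)
  ultimately show ?thesis
    using minor2_in_I2[OF assms(2)] by (simp add: indispensable_def)
qed

theorem proposition4p6:
  fixes d :: "'n::finite \<Rightarrow> nat"
  assumes "card (UNIV :: 'n set) \<ge> 2"
    and "\<forall>i. d i > 0"
  shows "ideal_gen {B. indispensable (I2 d :: ('n, 'k::field) mpoly set) B} = I2 d"
proof
  have "{B. indispensable (I2 d :: ('n, 'k) mpoly set) B} \<subseteq> I2 d"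
    by (auto simp: indispensable_def)
  then show "ideal_gen {B. indispensable (I2 d :: ('n, 'k) mpoly set) B} \<subseteq> I2 d"
    unfolding I2_def[of d] by (rule ideal_gen_least)
  have "{minor2 d i j | i j. i \<noteq> j} \<subseteq> {B. indispensable (I2 d :: ('n, 'k) mpoly set) B}"
    using minor2_indispensable[OF assms(2)] by blast
  then show "I2 d \<subseteq> ideal_gen {B. indispensable (I2 d :: ('n, 'k) mpoly set) B}"
    unfolding I2_def[of d] by (rule ideal_gen_mono)
qed

end
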